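(* Let $q>0$ and let $u\in C^{4}(\mathbb{R}^{2})$, $u>0$, solve $\Delta^{2}u+u^{-q}=0$ in $\mathbb{R}^{2}$. Then for all $r>0$: $\bar u'(r)>0$, $\bar u''(r)>0$, $\bar u'''(r)<0$, and $\bar w'(r)<0$.
   Context: $w:=\Delta u$. For a function $f$ on $\mathbb{R}^{2}$, $\bar f(r)$ denotes its spherical average over $\partial B_{r}(0)$ ($\bar f(0)=f(0)$); derivatives are with respect to $r$. *)

theory Defs
  imports "HOL-Analysis.Analysis"
begin

definition px :: "(real \<times> real \<Rightarrow> real) \<Rightarrow> real \<times> real \<Rightarrow> real" where
  "px f z = deriv (\<lambda>t. f (t, snd z)) (fst z)"

definition py :: "(real \<times> real \<Rightarrow> real) \<Rightarrow> real \<times> real \<Rightarrow> real" where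
  "py f z = deriv (\<lambda>t. f (fst z, t)) (snd z)"

fun Ck :: "nat \<Rightarrow> (real \<times> real \<Rightarrow> real) \<Rightarrow> bool" where
  "Ck 0 f = continuous_on UNIV f"
| "Ck (Suc k) f = (continuous_on UNIV f \<and>
      (\<forall>z. (\<lambda>t. f (t, snd z)) differentiable (at (fst z)) \<and>
           (\<lambda>t. f (fst z, t)) differentiable (at (snd z))) \<and>
      Ck k (px f) \<and> Ck k (py f))"

definition laplacian :: "(real \<times> real \<Rightarrow> real) \<Rightarrow> real \<times> real \<Rightarrow> real" where
  "laplacian f = (\<lambda>z. px (px f) z + py (py f) z)"

definition sph_avg :: "(real \<times> real \<Rightarrow> real) \<Rightarrow> real \<Rightarrow> real" where
  "sph_avg f r = integral {0..2*pi} (\<lambda>\<theta>. f (r * cos \<theta>, r * sin \<theta>)) / (2*pi)"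

end

(*
  Averaging over circles turns the equation into two radial relations between the averages
  U of u and W of w = \<Delta>u:  U'' + U'/r = W  and  W'' + W'/r = average of \<Delta>w = -(average of u powr -q) < 0,
  together with U'(0) = 0 and U \<ge> 0.  Since (r W')' = r (W'' + W'/r) < 0 and r W' vanishes at 0,
  W' < 0.  Differentiating U'' = W - U'/r, the function K = r^3 U''' has
  K' = r^2 W' + r^3 (W'' + W'/r) < 0 and K(0) = 0, so U''' < 0.  Thus U'' is decreasing; if it
  were ever nonpositive, U would eventually be uniformly concave and hence negative.  So U'' > 0,
  and U' > 0 follows from U'(0) = 0.
*)
theory Submission
  imports Defs
begin

lemma Ck_imp_continuous: "Ck k f \<Longrightarrow> continuous_on UNIV f"
  by (cases k) auto

lemma
  assumes "Ck (Suc k) f"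
  shows Ck_Suc_has_px: "((\<lambda>t. f (t, y)) has_real_derivative px f (x, y)) (at x)"
    and Ck_Suc_has_py: "((\<lambda>t. f (x, t)) has_real_derivative py f (x, y)) (at y)"
    and Ck_Suc_px: "Ck k (px f)"
    and Ck_Suc_py: "Ck k (py f)"
  using assms by (auto simp: px_def py_def DERIV_deriv_iff_real_differentiable)

lemma has_derivative_Ck_Suc:
  assumes "Ck (Suc k) f"
  shows "(f has_derivative (\<lambda>(s, t). px f z * s + py f z * t)) (at z)"
proof -
  obtain x y where z: "z = (x, y)" by (cases z)
  have "((\<lambda>(x, y). f (x, y)) has_derivative (\<lambda>(s, t). px f (x, y) * s + blinfun_mult_left (py f (x, y)) t))
      (at (x, y) within UNIV \<times> UNIV)"
  proof (rule has_derivative_partialsI)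
    show "((\<lambda>x. f (x, y)) has_derivative (*) (px f (x, y))) (at x)"
      using Ck_Suc_has_px[OF assms] by (simp add: has_field_derivative_def)
    show "((\<lambda>t. f (x', t)) has_derivative blinfun_apply (blinfun_mult_left (py f (x', y')))) (at y' within UNIV)" for x' y'
      using Ck_Suc_has_py[OF assms] by (simp add: has_field_derivative_def mult.commute[of _ "py f _"] mult_commute_abs)
    have "continuous_on UNIV (\<lambda>z. blinfun_mult_left (py f z))"
      using Ck_imp_continuous[OF Ck_Suc_py[OF assms]]
      by (rule continuous_on_compose2[OF linear_continuous_on[OF bounded_linear_blinfun_mult_left]]) auto
    then show "continuous (at (x, y) within UNIV \<times> UNIV) (\<lambda>(x, y). blinfun_mult_left (py f (x, y)))"
      by (simp add: continuous_on_eq_continuous_at case_prod_beta')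
  qed auto
  then show ?thesis by (simp add: z case_prod_beta' mult.commute)
qed

lemma Ck_Suc_imp_Ck: "Ck (Suc k) f \<Longrightarrow> Ck k f"
proof (induction k arbitrary: f)
  case (Suc k)
  then show ?case
    unfolding Ck.simps(2)[of "Suc k" f] Ck.simps(2)[of k f] by blast
qed simp

lemma Ck_add: "Ck k f \<Longrightarrow> Ck k g \<Longrightarrow> Ck k (\<lambda>z. f z + g z)"
proof (induction k arbitrary: f g)
  case 0
  then show ?case by (auto intro: continuous_on_add)
next
  case (Suc k)
  have "px (\<lambda>z. f z + g z) = (\<lambda>z. px f z + px g z)"
    using DERIV_add[OF Ck_Suc_has_px[OF Suc.prems(1)] Ck_Suc_has_px[OF Suc.prems(2)]]
    by (auto simp: px_def[of "\<lambda>z. f z + g z"] DERIV_imp_deriv)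
  moreover have "py (\<lambda>z. f z + g z) = (\<lambda>z. py f z + py g z)"
    using DERIV_add[OF Ck_Suc_has_py[OF Suc.prems(1)] Ck_Suc_has_py[OF Suc.prems(2)]]
    by (auto simp: py_def[of "\<lambda>z. f z + g z"] DERIV_imp_deriv)
  ultimately show ?case
    using Suc by (auto intro: continuous_on_add differentiable_add)
qed

lemma Ck_Suc_has_derivative_comp:
  assumes "Ck (Suc k) f"
    and "(a has_real_derivative a') (at r)" "(b has_real_derivative b') (at r)"
  shows "((\<lambda>r. f (a r, b r)) has_real_derivative px f (a r, b r) * a' + py f (a r, b r) * b') (at r)"
proof -
  have "((\<lambda>r. (a r, b r)) has_derivative (\<lambda>h. (a' * h, b' * h))) (at r)"
    using assms(2,3) unfolding has_field_derivative_def by (rule has_derivative_Pair)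
  from has_derivative_compose[OF this has_derivative_Ck_Suc[OF assms(1)]]
  show ?thesis
    unfolding has_field_derivative_def
    by (rule has_derivative_eq_rhs) (auto simp: fun_eq_iff algebra_simps)
qed

abbreviation polar :: "real \<Rightarrow> real \<Rightarrow> real \<times> real" where
  "polar r \<theta> \<equiv> (r * cos \<theta>, r * sin \<theta>)"

definition radial_deriv :: "(real \<times> real \<Rightarrow> real) \<Rightarrow> real \<Rightarrow> real \<Rightarrow> real" where
  "radial_deriv f r \<theta> = px f (polar r \<theta>) * cos \<theta> + py f (polar r \<theta>) * sin \<theta>"

definition radial_deriv2 :: "(real \<times> real \<Rightarrow> real) \<Rightarrow> real \<Rightarrow> real \<Rightarrow> real" where
  "radial_deriv2 f r \<theta> = radial_deriv (px f) r \<theta> * cos \<theta> + radial_deriv (py f) r \<theta> * sin \<theta>"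

definition angular_deriv :: "(real \<times> real \<Rightarrow> real) \<Rightarrow> real \<Rightarrow> real \<Rightarrow> real" where
  "angular_deriv f r \<theta> = py f (polar r \<theta>) * (r * cos \<theta>) - px f (polar r \<theta>) * (r * sin \<theta>)"

lemma has_real_derivative_polar_radius:
  assumes "Ck (Suc k) f"
  shows "((\<lambda>r. f (polar r \<theta>)) has_real_derivative radial_deriv f r \<theta>) (at r)"
proof -
  have "((\<lambda>r. r * cos \<theta>) has_real_derivative cos \<theta>) (at r)"
    and "((\<lambda>r. r * sin \<theta>) has_real_derivative sin \<theta>) (at r)"
    by (auto intro!: derivative_eq_intros)
  from Ck_Suc_has_derivative_comp[OF assms this] show ?thesis
    by (simp add: radial_deriv_def)
qed

lemma has_real_derivative_polar_angle:
  assumes "Ck (Suc k) f"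
  shows "((\<lambda>\<theta>. f (polar r \<theta>)) has_real_derivative angular_deriv f r \<theta>) (at \<theta>)"
proof -
  have "((\<lambda>\<theta>. r * cos \<theta>) has_real_derivative - (r * sin \<theta>)) (at \<theta>)"
    and "((\<lambda>\<theta>. r * sin \<theta>) has_real_derivative r * cos \<theta>) (at \<theta>)"
    by (auto intro!: derivative_eq_intros)
  from Ck_Suc_has_derivative_comp[OF assms this] show ?thesis
    by (simp add: angular_deriv_def)
qed

lemma radial_deriv_has_real_derivative:
  assumes "Ck (Suc (Suc k)) f"
  shows "((\<lambda>r. radial_deriv f r \<theta>) has_real_derivative radial_deriv2 f r \<theta>) (at r)"
  unfolding radial_deriv_def[of f] radial_deriv2_def
  using assms by (intro DERIV_add DERIV_cmult_right has_real_derivative_polar_radius Ck_Suc_px Ck_Suc_py)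

(* The polar form of the Laplacian: \<Delta> = d\<^sup>2/dr\<^sup>2 + (1/r) d/dr + (1/r\<^sup>2) d\<^sup>2/d\<theta>\<^sup>2. *)

lemma angular_deriv_has_real_derivative:
  assumes "Ck (Suc (Suc k)) f"
  shows "((\<lambda>\<theta>. angular_deriv f r \<theta>) has_real_derivative
      r\<^sup>2 * (laplacian f (polar r \<theta>) - radial_deriv2 f r \<theta>) - r * radial_deriv f r \<theta>) (at \<theta>)"
proof -
  have "((\<lambda>\<theta>. angular_deriv f r \<theta>) has_real_derivative
      angular_deriv (py f) r \<theta> * (r * cos \<theta>) - py f (polar r \<theta>) * (r * sin \<theta>)
      - (angular_deriv (px f) r \<theta> * (r * sin \<theta>) + px f (polar r \<theta>) * (r * cos \<theta>))) (at \<theta>)"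
    unfolding angular_deriv_def[of f]
    using assms by (auto intro!: derivative_eq_intros has_real_derivative_polar_angle Ck_Suc_px Ck_Suc_py)
  moreover have "angular_deriv (py f) r \<theta> * (r * cos \<theta>) - py f (polar r \<theta>) * (r * sin \<theta>)
      - (angular_deriv (px f) r \<theta> * (r * sin \<theta>) + px f (polar r \<theta>) * (r * cos \<theta>))
    = r\<^sup>2 * (laplacian f (polar r \<theta>) - radial_deriv2 f r \<theta>) - r * radial_deriv f r \<theta>"
    using sin_cos_squared_add3[of \<theta>]
    unfolding angular_deriv_def radial_deriv2_def radial_deriv_def laplacian_def
    by algebra
  ultimately show ?thesis by (rule DERIV_cong)
qed

lemma continuous_on_comp_polar:
  fixes S :: "'a::t2_space set"
  assumes "continuous_on UNIV F" "continuous_on S g" "continuous_on S h"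
  shows "continuous_on S (\<lambda>x. F (polar (g x) (h x)))"
  by (rule continuous_on_compose2[OF assms(1)]) (auto intro!: continuous_intros assms(2,3))

lemma continuous_on_radial_deriv:
  fixes S :: "'a::t2_space set"
  assumes "Ck (Suc k) f" "continuous_on S g" "continuous_on S h"
  shows "continuous_on S (\<lambda>x. radial_deriv f (g x) (h x))"
  unfolding radial_deriv_def
  using Ck_imp_continuous[OF Ck_Suc_px[OF assms(1)]] Ck_imp_continuous[OF Ck_Suc_py[OF assms(1)]]
  by (intro continuous_intros continuous_on_comp_polar assms(2,3))

lemma continuous_on_radial_deriv2:
  fixes S :: "'a::t2_space set"
  assumes "Ck (Suc (Suc k)) f" "continuous_on S g" "continuous_on S h"
  shows "continuous_on S (\<lambda>x. radial_deriv2 f (g x) (h x))"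
  unfolding radial_deriv2_def
  using assms by (intro continuous_intros continuous_on_radial_deriv Ck_Suc_px Ck_Suc_py)

lemma continuous_on_laplacian:
  assumes "Ck (Suc (Suc k)) f"
  shows "continuous_on UNIV (laplacian f)"
  unfolding laplacian_def
  using Ck_imp_continuous[OF Ck_Suc_px[OF Ck_Suc_px[OF assms]]]
    Ck_imp_continuous[OF Ck_Suc_py[OF Ck_Suc_py[OF assms]]]
  by (intro continuous_intros)

definition circle_avg :: "(real \<Rightarrow> real \<Rightarrow> real) \<Rightarrow> real \<Rightarrow> real" where
  "circle_avg g r = integral {0..2*pi} (g r) / (2*pi)"

lemma sph_avg_eq_circle_avg: "sph_avg f = circle_avg (\<lambda>r \<theta>. f (polar r \<theta>))"
  by (simp add: fun_eq_iff sph_avg_def circle_avg_def)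

lemma has_real_derivative_circle_avg:
  assumes "\<And>r \<theta>. ((\<lambda>r. g r \<theta>) has_real_derivative g' r \<theta>) (at r)"
    and "\<And>r. continuous_on {0..2*pi} (g r)"
    and "continuous_on UNIV (\<lambda>(r, \<theta>). g' r \<theta>)"
  shows "(circle_avg g has_real_derivative circle_avg g' r) (at r)"
proof -
  have "((\<lambda>r. integral (cbox 0 (2*pi)) (g r)) has_real_derivative integral (cbox 0 (2*pi)) (g' r))
      (at r within UNIV)"
    using assms by (intro leibniz_rule_field_derivative integrable_continuous) (auto intro: continuous_on_subset)
  from DERIV_cdivide[OF this, of "2*pi"] show ?thesis
    by (simp add: circle_avg_def[abs_def])
qed

lemma continuous_on_circle_avg:
  assumes "continuous_on UNIV (\<lambda>(r, \<theta>). g r \<theta>)"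
  shows "continuous_on UNIV (circle_avg g)"
proof -
  have "continuous_on UNIV (\<lambda>r. integral (cbox 0 (2*pi)) (g r))"
    using assms by (intro integral_continuous_on_param) (auto intro: continuous_on_subset)
  then show ?thesis
    unfolding circle_avg_def[abs_def] by (intro continuous_intros) auto
qed

lemma has_real_derivative_sph_avg:
  assumes "Ck (Suc k) f"
  shows "(sph_avg f has_real_derivative circle_avg (radial_deriv f) r) (at r)"
  unfolding sph_avg_eq_circle_avg
proof (rule has_real_derivative_circle_avg[OF has_real_derivative_polar_radius[OF assms]])
  show "continuous_on {0..2*pi} (\<lambda>\<theta>. f (polar r \<theta>))" for r
    by (intro continuous_on_comp_polar[OF Ck_imp_continuous[OF assms]] continuous_intros)
  show "continuous_on UNIV (\<lambda>(r, \<theta>). radial_deriv f r \<theta>)"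
    unfolding case_prod_beta' by (intro continuous_on_radial_deriv[OF assms] continuous_intros)
qed

lemma has_real_derivative_circle_avg_radial_deriv:
  assumes "Ck (Suc (Suc k)) f"
  shows "(circle_avg (radial_deriv f) has_real_derivative circle_avg (radial_deriv2 f) r) (at r)"
proof (rule has_real_derivative_circle_avg[OF radial_deriv_has_real_derivative[OF assms]])
  show "continuous_on {0..2*pi} (radial_deriv f r)" for r
    by (intro continuous_on_radial_deriv[OF Ck_Suc_imp_Ck[OF assms]] continuous_intros)
  show "continuous_on UNIV (\<lambda>(r, \<theta>). radial_deriv2 f r \<theta>)"
    unfolding case_prod_beta' by (intro continuous_on_radial_deriv2[OF assms] continuous_intros)
qed

lemma circle_avg_radial_deriv_0: "circle_avg (radial_deriv f) 0 = 0"
proof -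
  have "(cos has_integral sin (2*pi) - sin 0) {0..2*pi}"
  proof (rule fundamental_theorem_of_calculus)
    show "(sin has_vector_derivative cos x) (at x within {0..2*pi})" for x
      unfolding has_real_derivative_iff_has_vector_derivative[symmetric]
      by (rule has_field_derivative_at_within[OF DERIV_sin])
  qed simp
  moreover have "(sin has_integral (- cos (2*pi)) - (- cos 0)) {0..2*pi}"
  proof (rule fundamental_theorem_of_calculus)
    show "((\<lambda>x. - cos x) has_vector_derivative sin x) (at x within {0..2*pi})" for x
      unfolding has_real_derivative_iff_has_vector_derivative[symmetric]
      using has_field_derivative_at_within[OF DERIV_minus[OF DERIV_cos]] by simp
  qed simp
  ultimately have "((\<lambda>\<theta>. px f (0, 0) * cos \<theta> + py f (0, 0) * sin \<theta>) has_integral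
      px f (0, 0) * 0 + py f (0, 0) * 0) {0..2*pi}"
    by (intro has_integral_add has_integral_mult_right) simp_all
  then show ?thesis
    by (simp add: circle_avg_def radial_deriv_def[abs_def] integral_unique)
qed

lemma circle_avg_polar_laplacian:
  assumes "Ck (Suc (Suc k)) f" "r \<noteq> 0"
  shows "circle_avg (radial_deriv2 f) r + circle_avg (radial_deriv f) r / r = sph_avg (laplacian f) r"
proof -
  define L where "L \<theta> = laplacian f (polar r \<theta>)" for \<theta>
  have int_L: "L integrable_on {0..2*pi}"
    unfolding L_def
    by (intro integrable_continuous_interval continuous_intros
        continuous_on_comp_polar[OF continuous_on_laplacian[OF assms(1)]])
  have int_R: "radial_deriv f r integrable_on {0..2*pi}"
    by (intro integrable_continuous_interval continuous_on_radial_deriv[OF Ck_Suc_imp_Ck[OF assms(1)]] continuous_intros)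
  have int_R2: "radial_deriv2 f r integrable_on {0..2*pi}"
    by (intro integrable_continuous_interval continuous_on_radial_deriv2[OF assms(1)] continuous_intros)
  have ftc: "((\<lambda>\<theta>. r\<^sup>2 * (L \<theta> - radial_deriv2 f r \<theta>) - r * radial_deriv f r \<theta>) has_integral
      angular_deriv f r (2*pi) - angular_deriv f r 0) {0..2*pi}"
  proof (rule fundamental_theorem_of_calculus)
    fix \<theta> assume "\<theta> \<in> {0..2*pi}"
    show "(angular_deriv f r has_vector_derivative
        r\<^sup>2 * (L \<theta> - radial_deriv2 f r \<theta>) - r * radial_deriv f r \<theta>) (at \<theta> within {0..2*pi})"
      unfolding has_real_derivative_iff_has_vector_derivative[symmetric] L_def
      by (rule has_field_derivative_at_within[OF angular_deriv_has_real_derivative[OF assms(1)]])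
  qed simp
  have "((\<lambda>\<theta>. r\<^sup>2 * (L \<theta> - radial_deriv2 f r \<theta>) - r * radial_deriv f r \<theta>) has_integral
      r\<^sup>2 * (integral {0..2*pi} L - integral {0..2*pi} (radial_deriv2 f r))
      - r * integral {0..2*pi} (radial_deriv f r)) {0..2*pi}"
    using int_L int_R int_R2 by (intro has_integral_diff has_integral_mult_right integrable_integral)
  (* the angular derivative is 2\<pi>-periodic, so the d\<^sup>2/d\<theta>\<^sup>2 term averages out *)
  from has_integral_unique[OF ftc this]
  have "r\<^sup>2 * (integral {0..2*pi} L - integral {0..2*pi} (radial_deriv2 f r))
      - r * integral {0..2*pi} (radial_deriv f r) = 0"
    by (simp add: angular_deriv_def)
  then have "r * (r * (integral {0..2*pi} L - integral {0..2*pi} (radial_deriv2 f r))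
      - integral {0..2*pi} (radial_deriv f r)) = 0"
    by (simp add: power2_eq_square right_diff_distrib mult.assoc)
  then have "integral {0..2*pi} (radial_deriv f r) = r * (integral {0..2*pi} L - integral {0..2*pi} (radial_deriv2 f r))"
    using assms(2) by simp
  moreover have "sph_avg (laplacian f) r = integral {0..2*pi} L / (2*pi)"
    by (simp add: sph_avg_def L_def[abs_def])
  ultimately show ?thesis
    using assms(2) by (simp add: circle_avg_def field_simps)
qed

lemma sph_avg_nonneg:
  assumes "continuous_on UNIV f" "\<And>z. f z \<ge> 0"
  shows "sph_avg f r \<ge> 0"
  unfolding sph_avg_def
proof (intro divide_nonneg_pos integral_nonneg)
  show "(\<lambda>\<theta>. f (polar r \<theta>)) integrable_on {0..2*pi}"
    by (intro integrable_continuous_interval continuous_on_comp_polar[OF assms(1)] continuous_intros)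
qed (use assms(2) in auto)

lemma sph_avg_neg:
  assumes "continuous_on UNIV f" "\<And>z. f z < 0"
  shows "sph_avg f r < 0"
proof -
  have "integral {0..2*pi} (\<lambda>\<theta>. f (polar r \<theta>)) < integral {0..2*pi} (\<lambda>\<theta>. 0)"
  proof (rule integral_less_real)
    show "continuous_on {0..2*pi} (\<lambda>\<theta>. f (polar r \<theta>))"
      by (intro continuous_on_comp_polar[OF assms(1)] continuous_intros)
    show "{0<..<2*pi} \<noteq> {}"
      by (simp add: not_le)
  qed (simp_all add: assms(2))
  then show ?thesis
    unfolding sph_avg_def by (intro divide_neg_pos) simp_all
qed

lemma deriv_neg_of_radial_laplacian_neg:
  fixes W' W'' :: "real \<Rightarrow> real"
  assumes W'_deriv: "\<And>t. (W' has_real_derivative W'' t) (at t)"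
    and neg: "\<And>t. t > 0 \<Longrightarrow> W'' t + W' t / t < 0"
    and "r > 0"
  shows "W' r < 0"
proof -
  have "(\<lambda>t. t * W' t) 0 > (\<lambda>t. t * W' t) r"
  proof (rule DERIV_neg_imp_decreasing_open[OF \<open>r > 0\<close>])
    fix t :: real assume "0 < t" "t < r"
    have "((\<lambda>t. t * W' t) has_real_derivative t * (W'' t + W' t / t)) (at t)"
      using W'_deriv \<open>0 < t\<close> by (auto intro!: derivative_eq_intros simp: field_simps)
    then show "\<exists>y. ((\<lambda>t. t * W' t) has_real_derivative y) (at t) \<and> y < 0"
      using neg \<open>0 < t\<close> mult_pos_neg by blast
  next
    show "continuous_on {0..r} (\<lambda>t. t * W' t)"
      using W'_deriv by (intro continuous_intros continuous_at_imp_continuous_on) (blast intro: DERIV_isCont)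
  qed
  then show ?thesis
    using \<open>r > 0\<close> by (simp add: mult_less_0_iff)
qed

lemma exists_neg_of_second_deriv_le_neg:
  fixes f f' f'' :: "real \<Rightarrow> real"
  assumes "c > 0"
    and f_deriv: "\<And>t. t \<ge> a \<Longrightarrow> (f has_real_derivative f' t) (at t)"
    and f'_deriv: "\<And>t. t \<ge> a \<Longrightarrow> (f' has_real_derivative f'' t) (at t)"
    and f''_le: "\<And>t. t \<ge> a \<Longrightarrow> f'' t \<le> - c"
  shows "\<exists>t \<ge> a. f t < 0"
proof -
  have f'_le: "f' t + c * t \<le> f' a + c * a" if "t \<ge> a" for t
  proof (rule deriv_nonpos_imp_antimono[of a t _ "\<lambda>x. f'' x + c"])
    fix x assume "x \<in> {a..t}"
    then show "((\<lambda>x. f' x + c * x) has_real_derivative f'' x + c) (at x)" "f'' x + c \<le> 0"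
      using f'_deriv f''_le[of x] by (auto intro!: derivative_eq_intros)
  qed (use that in simp)
  define b where "b = a + (\<bar>f' a\<bar> + 1) / c"
  have "b \<ge> a"
    using \<open>c > 0\<close> by (simp add: b_def)
  have f'_le_minus_1: "f' t \<le> -1" if "t \<ge> b" for t
  proof -
    have "c * (t - a) \<ge> \<bar>f' a\<bar> + 1"
      using that \<open>c > 0\<close> by (simp add: b_def field_simps)
    then show ?thesis
      using f'_le[of t] that \<open>b \<ge> a\<close> by (simp add: algebra_simps)
  qed
  define t where "t = b + \<bar>f b\<bar> + 1"
  have "f t + t \<le> f b + b"
  proof (rule deriv_nonpos_imp_antimono[of b t _ "\<lambda>x. f' x + 1"])
    fix x assume "x \<in> {b..t}"
    then show "((\<lambda>x. f x + x) has_real_derivative f' x + 1) (at x)" "f' x + 1 \<le> 0"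
      using f_deriv f'_le_minus_1[of x] \<open>b \<ge> a\<close> by (auto intro!: derivative_eq_intros)
  qed (simp add: t_def)
  then have "f t < 0"
    by (simp add: t_def)
  moreover have "t \<ge> a"
    using \<open>b \<ge> a\<close> by (simp add: t_def)
  ultimately show ?thesis
    by blast
qed

text \<open>\<open>U\<close> and \<open>W\<close> play the roles of the circle averages of \<open>u\<close> and of \<open>w = \<Delta>u\<close>; the last two
  hypotheses are the averaged forms of \<open>\<Delta>u = w\<close> and \<open>\<Delta>w < 0\<close>.\<close>

locale radial_neg_bilaplacian =
  fixes U U' U'' W W' W'' :: "real \<Rightarrow> real"
  assumes U_deriv: "\<And>t. (U has_real_derivative U' t) (at t)"
    and U'_deriv: "\<And>t. (U' has_real_derivative U'' t) (at t)"
    and U''_cont: "continuous_on UNIV U''"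
    and W_deriv: "\<And>t. (W has_real_derivative W' t) (at t)"
    and W'_deriv: "\<And>t. (W' has_real_derivative W'' t) (at t)"
    and U_nonneg: "\<And>t. U t \<ge> 0"
    and U'_0: "U' 0 = 0"
    and U_laplacian: "\<And>t. t > 0 \<Longrightarrow> U'' t + U' t / t = W t"
    and W_laplacian_neg: "\<And>t. t > 0 \<Longrightarrow> W'' t + W' t / t < 0"
begin

lemma W'_neg: "t > 0 \<Longrightarrow> W' t < 0"
  by (rule deriv_neg_of_radial_laplacian_neg[OF W'_deriv W_laplacian_neg])

text \<open>Obtained by differentiating \<open>U'' = W - U'/t\<close>.\<close>

definition U''' :: "real \<Rightarrow> real" where
  "U''' t = W' t - U'' t / t + U' t / t\<^sup>2"

lemma U''_deriv:
  assumes "t > 0"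
  shows "(U'' has_real_derivative U''' t) (at t)"
proof -
  have "((\<lambda>s. W s - U' s / s) has_real_derivative W' t - (U'' t * t - U' t) / t\<^sup>2) (at t)"
    using assms by (auto intro!: derivative_eq_intros W_deriv U'_deriv simp: power2_eq_square)
  then have "(U'' has_real_derivative W' t - (U'' t * t - U' t) / t\<^sup>2) (at t)"
    by (rule has_field_derivative_transform_within_open[where S="{0<..}"])
       (use assms U_laplacian in \<open>auto simp: field_simps\<close>)
  then show ?thesis
    using assms by (simp add: U'''_def field_simps power2_eq_square)
qed

lemma U'''_neg:
  assumes "r > 0"
  shows "U''' r < 0"
proof -
  (* K equals t^3 U''' for t > 0, but unlike U''' it is continuous at 0, where it vanishes *)
  define K where "K t = t^3 * W' t - t\<^sup>2 * U'' t + t * U' t" for t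
  have "K 0 > K r"
  proof (rule DERIV_neg_imp_decreasing_open[OF assms])
    fix t :: real assume "0 < t" "t < r"
    have "((\<lambda>s. s^3 * W' s) has_real_derivative 3 * t\<^sup>2 * W' t + t^3 * W'' t) (at t)"
      by (rule DERIV_cong[OF DERIV_mult[OF DERIV_pow W'_deriv]]) (simp add: power2_eq_square)
    moreover have "((\<lambda>s. s\<^sup>2 * U'' s) has_real_derivative 2 * t * U'' t + t\<^sup>2 * U''' t) (at t)"
      by (rule DERIV_cong[OF DERIV_mult[OF DERIV_pow U''_deriv[OF \<open>0 < t\<close>]]]) simp
    moreover have "((\<lambda>s. s * U' s) has_real_derivative U' t + t * U'' t) (at t)"
      by (rule DERIV_cong[OF DERIV_mult[OF DERIV_ident U'_deriv]]) simp
    ultimately have "(K has_real_derivative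
        (3 * t\<^sup>2 * W' t + t^3 * W'' t) - (2 * t * U'' t + t\<^sup>2 * U''' t) + (U' t + t * U'' t)) (at t)"
      unfolding K_def[abs_def] by (intro DERIV_add DERIV_diff)
    moreover have "(3 * t\<^sup>2 * W' t + t^3 * W'' t) - (2 * t * U'' t + t\<^sup>2 * U''' t) + (U' t + t * U'' t)
        = t\<^sup>2 * W' t + t^3 * (W'' t + W' t / t)"
      using \<open>0 < t\<close> by (simp add: U'''_def field_simps power2_eq_square power3_eq_cube)
    moreover have "t\<^sup>2 * W' t + t^3 * (W'' t + W' t / t) < 0"
      using W'_neg[of t] W_laplacian_neg[of t] \<open>0 < t\<close>
      by (simp add: add_neg_neg mult_pos_neg)
    ultimately show "\<exists>y. (K has_real_derivative y) (at t) \<and> y < 0"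
      by auto
  next
    have "continuous_on {0..r} U'" "continuous_on {0..r} W'"
      using U'_deriv W'_deriv by (auto intro!: continuous_at_imp_continuous_on DERIV_isCont)
    then show "continuous_on {0..r} K"
      unfolding K_def by (intro continuous_intros continuous_on_subset[OF U''_cont]) auto
  qed
  moreover have "K r = r^3 * U''' r"
    using assms by (simp add: K_def U'''_def field_simps power2_eq_square power3_eq_cube)
  ultimately show ?thesis
    using assms by (simp add: K_def mult_less_0_iff)
qed

lemma U''_strict_decreasing:
  assumes "0 < t" "t < s"
  shows "U'' s < U'' t"
proof (rule DERIV_neg_imp_decreasing[OF assms(2)])
  fix x assume "t \<le> x"
  then have "x > 0"
    using assms(1) by simp
  then show "\<exists>y. (U'' has_real_derivative y) (at x) \<and> y < 0"
    using U''_deriv U'''_neg by (intro exI conjI)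
qed

lemma U''_pos:
  assumes "r > 0"
  shows "U'' r > 0"
proof (rule ccontr)
  assume "\<not> U'' r > 0"
  define c where "c = - U'' (r + 1)"
  have "c > 0"
    using U''_strict_decreasing[of r "r + 1"] assms \<open>\<not> U'' r > 0\<close> by (simp add: c_def)
  moreover have "U'' t \<le> - c" if "t \<ge> r + 1" for t
    using U''_strict_decreasing[of "r + 1" t] that assms by (cases "t = r + 1") (auto simp: c_def)
  ultimately obtain t where "U t < 0"
    using exists_neg_of_second_deriv_le_neg[of c "r + 1" U U' U'', OF _ U_deriv U'_deriv] by auto
  then show False
    using U_nonneg[of t] by simp
qed

lemma U'_pos:
  assumes "r > 0"
  shows "U' r > 0"
proof -
  have "U' 0 < U' r"
  proof (rule DERIV_pos_imp_increasing_open[OF assms])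
    show "\<exists>y. (U' has_real_derivative y) (at t) \<and> y > 0" if "0 < t" for t
      using U'_deriv U''_pos[OF that] by (intro exI conjI)
    show "continuous_on {0..r} U'"
      using U'_deriv by (auto intro!: continuous_at_imp_continuous_on DERIV_isCont)
  qed
  then show ?thesis
    by (simp add: U'_0)
qed

end

lemma sph_avg_radial_neg_bilaplacian:
  assumes "Ck 4 u" "\<And>z. u z \<ge> 0" "\<And>z. laplacian (laplacian u) z < 0"
  shows "radial_neg_bilaplacian (sph_avg u) (circle_avg (radial_deriv u)) (circle_avg (radial_deriv2 u))
    (sph_avg (laplacian u)) (circle_avg (radial_deriv (laplacian u))) (circle_avg (radial_deriv2 (laplacian u)))"
proof -
  have u: "Ck (Suc (Suc 2)) u"
    using assms(1) by (simp add: eval_nat_numeral)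
  have "Ck 2 (laplacian u)"
    unfolding laplacian_def by (intro Ck_add Ck_Suc_px Ck_Suc_py u)
  then have w: "Ck (Suc (Suc 0)) (laplacian u)"
    by (simp add: numeral_2_eq_2)
  have continuous_circle_avg_radial_deriv2: "continuous_on UNIV (circle_avg (radial_deriv2 f))"
    if "Ck (Suc (Suc k)) f" for f k
    by (intro continuous_on_circle_avg)
       (simp add: case_prod_beta' continuous_on_radial_deriv2[OF that] continuous_on_fst continuous_on_snd)
  show ?thesis
  proof
    show "t > 0 \<Longrightarrow> circle_avg (radial_deriv2 (laplacian u)) t + circle_avg (radial_deriv (laplacian u)) t / t < 0" for t
      using circle_avg_polar_laplacian[OF w] sph_avg_neg[OF continuous_on_laplacian[OF w] assms(3)] by simp
    show "t > 0 \<Longrightarrow> circle_avg (radial_deriv2 u) t + circle_avg (radial_deriv u) t / t = sph_avg (laplacian u) t" for t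
      using circle_avg_polar_laplacian[OF u] by simp
    show "sph_avg u t \<ge> 0" for t
      using sph_avg_nonneg[OF Ck_imp_continuous[OF u] assms(2)] .
  qed (rule has_real_derivative_sph_avg has_real_derivative_circle_avg_radial_deriv
      continuous_circle_avg_radial_deriv2 circle_avg_radial_deriv_0 u w)+
qed

theorem mainTheorem13:
  fixes u :: "real \<times> real \<Rightarrow> real" and q :: real
  assumes "q > 0"
    and "Ck 4 u"
    and "\<forall>z. u z > 0"
    and "\<forall>z. laplacian (laplacian u) z + u z powr (- q) = 0"
  shows "\<forall>r > 0.
     (sph_avg u has_real_derivative deriv (sph_avg u) r) (at r) \<and>
     (deriv (sph_avg u) has_real_derivative (deriv ^^ 2) (sph_avg u) r) (at r) \<and>
     ((deriv ^^ 2) (sph_avg u) has_real_derivative (deriv ^^ 3) (sph_avg u) r) (at r) \<and>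
     (sph_avg (laplacian u) has_real_derivative deriv (sph_avg (laplacian u)) r) (at r) \<and>
     deriv (sph_avg u) r > 0 \<and>
     (deriv ^^ 2) (sph_avg u) r > 0 \<and>
     (deriv ^^ 3) (sph_avg u) r < 0 \<and>
     deriv (sph_avg (laplacian u)) r < 0"
proof -
  have "laplacian (laplacian u) z < 0" for z
  proof -
    have "u z powr (- q) > 0"
      using assms(3)[rule_format, of z] by simp
    then show ?thesis
      using assms(4)[rule_format, of z] by linarith
  qed
  then interpret radial_neg_bilaplacian "sph_avg u" "circle_avg (radial_deriv u)"
    "circle_avg (radial_deriv2 u)" "sph_avg (laplacian u)" "circle_avg (radial_deriv (laplacian u))"
    "circle_avg (radial_deriv2 (laplacian u))"
    using assms(2,3) by (intro sph_avg_radial_neg_bilaplacian) (auto intro: less_imp_le)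
  have deriv_U: "deriv (sph_avg u) = circle_avg (radial_deriv u)"
    using U_deriv by (simp add: fun_eq_iff DERIV_imp_deriv)
  have deriv2_U: "(deriv ^^ 2) (sph_avg u) = circle_avg (radial_deriv2 u)"
    using U'_deriv by (simp add: numeral_2_eq_2 deriv_U fun_eq_iff DERIV_imp_deriv)
  have deriv_W: "deriv (sph_avg (laplacian u)) = circle_avg (radial_deriv (laplacian u))"
    using W_deriv by (simp add: fun_eq_iff DERIV_imp_deriv)
  have deriv3_U: "(deriv ^^ 3) (sph_avg u) r = U''' r" if "r > 0" for r
  proof -
    have "(deriv ^^ 3) (sph_avg u) = deriv ((deriv ^^ 2) (sph_avg u))"
      by (simp add: numeral_3_eq_3 numeral_2_eq_2)
    then show ?thesis
      using U''_deriv[OF that] by (simp add: deriv2_U DERIV_imp_deriv)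
  qed
  show ?thesis
    unfolding deriv_U deriv2_U deriv_W
    using U_deriv U'_deriv U''_deriv W_deriv deriv3_U U'_pos U''_pos U'''_neg W'_neg by auto
qed

end
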